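(* Let $M=(M_{ij})_{1\le i,j\le d}$ be a $d\times d$ real matrix with nonnegative coefficients, acting on row vectors by $x\mapsto xM$, and let $C=[0,\infty)^d\setminus\{0\}$. Then: (i) $M(C)\subset C$ if and only if each row of $M$ has a nonzero coefficient; (ii) if $M(C)\subset C$, then $c(M)<1$ if and only if for every pair $(i,j)$ with $M_{ij}=0$, the whole $j$-th column of $M$ is zero.
   Context: Coordinatewise order on $\mathbb{R}^d$. For $x,y\in C$: $\aleph(x,y)=\sup\{b\ge0\mid bx\le y\}$, $m(x,y)=\aleph(x,y)\aleph(y,x)$. On the set $\Pi(C)$ of open half-lines $\{bx:b>0\}$, $x\in C$, define $d(\bar x,\bar y)=\frac{1-m(x,y)}{1+m(x,y)}$ for representatives $x,y$. When $M(C)\subset C$, $M$ acts on $\Pi(C)$ by $M\cdot\Pi(x)=\Pi(xM)$, and $c(M)=\sup\{d(M\cdot\bar x,M\cdot\bar y)\mid\bar x,\bar y\in\Pi(C)\}$. *)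

theory Defs
  imports "HOL-Analysis.Analysis"
begin

definition posCone :: "(real ^ 'n) set" where
  "posCone = {x. (\<forall>i. 0 \<le> x $ i) \<and> x \<noteq> 0}"

definition aleph :: "real ^ 'n \<Rightarrow> real ^ 'n \<Rightarrow> real" where
  "aleph x y = Sup {b. 0 \<le> b \<and> (\<forall>i. b * x $ i \<le> y $ i)}"

definition mfun :: "real ^ 'n \<Rightarrow> real ^ 'n \<Rightarrow> real" where
  "mfun x y = aleph x y * aleph y x"

text \<open>Distance between the half-lines through x and y, computed on representatives.\<close>
definition hdist :: "real ^ 'n \<Rightarrow> real ^ 'n \<Rightarrow> real" where
  "hdist x y = (1 - mfun x y) / (1 + mfun x y)"

text \<open>Row vectors act by x \<mapsto> x M (vector_matrix_mult); c(M) is the sup of the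
  distance between images of half-lines, taken over representatives.\<close>
definition contr :: "real ^ 'n ^ 'n \<Rightarrow> real" where
  "contr M = Sup {hdist (x v* M) (y v* M) | x y. x \<in> posCone \<and> y \<in> posCone}"

end

theory Submission
  imports Defs
begin

text \<open>(i) The image of a nonnegative vector x is zero exactly when every row met by the support
  of x is zero; testing on the basis vectors shows that no row may vanish.

  (ii) If a column j is zero in some row i but not in row k, then the images of the basis vectors
  e_i and e_k satisfy aleph(e_k M, e_i M) = 0, so their distance is 1 and c(M) = 1.
  Conversely, if every column of M is either zero or strictly positive, let a > 0 bound the
  positive entries from below and A bound all entries from above. Every nonzero coordinate of
  x M lies between a |x|_1 and A |x|_1, hence aleph(x M, y M) \<ge> a |y|_1 / (A |x|_1), so
  m(x M, y M) \<ge> (a / A)^2 and c(M) \<le> (1 - r) / (1 + r) < 1 with r = (a / A)^2.\<close>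

lemma vector_matrix_mult_nth: "(x v* M) $ j = (\<Sum>i\<in>UNIV. x $ i * M $ i $ j)"
  by (simp add: vector_matrix_mult_def)

lemma axis_vector_matrix_mult: "axis k (1::'a::comm_semiring_1) v* M = M $ k"
proof -
  have "(\<Sum>i\<in>UNIV. axis k 1 $ i * M $ i $ j) = (\<Sum>i\<in>UNIV. if i = k then M $ i $ j else 0)" for j
    by (intro sum.cong) (auto simp: axis_def)
  then show ?thesis by (simp add: vec_eq_iff vector_matrix_mult_nth)
qed

lemma vector_matrix_mult_nth_le:
  fixes x :: "'a::{ordered_comm_semiring, semiring_1} ^ 'n"
  assumes "\<And>i. 0 \<le> x $ i" and "\<And>i. M $ i $ j \<le> A"
  shows "(x v* M) $ j \<le> A * (\<Sum>i\<in>UNIV. x $ i)"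
  unfolding vector_matrix_mult_nth sum_distrib_left
  by (rule sum_mono) (metis assms mult.commute mult_right_mono)

lemma vector_matrix_mult_nth_ge:
  fixes x :: "'a::{ordered_comm_semiring, semiring_1} ^ 'n"
  assumes "\<And>i. 0 \<le> x $ i" and "\<And>i. a \<le> M $ i $ j"
  shows "a * (\<Sum>i\<in>UNIV. x $ i) \<le> (x v* M) $ j"
  unfolding vector_matrix_mult_nth sum_distrib_left
  by (rule sum_mono) (metis assms mult.commute mult_right_mono)

lemma posCone_nonneg: "x \<in> posCone \<Longrightarrow> 0 \<le> x $ i"
  by (simp add: posCone_def)

lemma posCone_obtain_pos:
  assumes "x \<in> posCone"
  obtains i where "0 < x $ i"
proof -
  obtain i where "x $ i \<noteq> 0"
    using assms by (auto simp: posCone_def vec_eq_iff)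
  with posCone_nonneg[OF assms, of i] have "0 < x $ i"
    by (simp add: order_less_le)
  then show ?thesis by (rule that)
qed

lemma posCone_iff_ex_pos: "x \<in> posCone \<longleftrightarrow> (\<forall>i. 0 \<le> x $ i) \<and> (\<exists>i. 0 < x $ i)"
  by (force simp: posCone_def vec_eq_iff order_less_le)

lemma axis_in_posCone: "axis k 1 \<in> posCone"
  by (auto simp: posCone_iff_ex_pos axis_def intro: exI[of _ k])

lemma sum_pos_if_posCone: "x \<in> posCone \<Longrightarrow> 0 < (\<Sum>i\<in>UNIV. x $ i)"
  by (metis posCone_iff_ex_pos finite UNIV_I sum_pos2)

lemma aleph_ge:
  assumes x: "x \<in> posCone" and "0 \<le> b" and "\<And>i. b * x $ i \<le> y $ i"
  shows "b \<le> aleph x y"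
  unfolding aleph_def
proof (rule cSup_upper)
  obtain i where i: "0 < x $ i"
    using x by (rule posCone_obtain_pos)
  show "bdd_above {b. 0 \<le> b \<and> (\<forall>i. b * x $ i \<le> y $ i)}"
    by (rule bdd_aboveI[where M = "y $ i / x $ i"]) (auto simp: i pos_le_divide_eq)
qed (use assms in auto)

lemma aleph_nonneg: "x \<in> posCone \<Longrightarrow> y \<in> posCone \<Longrightarrow> 0 \<le> aleph x y"
  by (rule aleph_ge) (auto simp: posCone_nonneg)

lemma aleph_eq_0:
  assumes "x \<in> posCone" "y \<in> posCone" and "0 < x $ j" "y $ j = 0"
  shows "aleph x y = 0"
proof -
  have "aleph x y \<le> 0"
    unfolding aleph_def
  proof (rule cSup_least)
    fix b assume "b \<in> {b. 0 \<le> b \<and> (\<forall>i. b * x $ i \<le> y $ i)}"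
    then have "b * x $ j \<le> y $ j" by blast
    then have "b * x $ j \<le> 0" using \<open>y $ j = 0\<close> by simp
    with \<open>0 < x $ j\<close> show "b \<le> 0" by (simp add: mult_le_0_iff)
  qed (use assms in \<open>auto simp: posCone_nonneg\<close>)
  with aleph_nonneg[OF assms(1,2)] show ?thesis by simp
qed

lemma mfun_nonneg: "x \<in> posCone \<Longrightarrow> y \<in> posCone \<Longrightarrow> 0 \<le> mfun x y"
  by (simp add: mfun_def aleph_nonneg)

lemma hdist_le_1: "x \<in> posCone \<Longrightarrow> y \<in> posCone \<Longrightarrow> hdist x y \<le> 1"
  using mfun_nonneg[of x y] by (simp add: hdist_def)

lemma hdist_le_if_mfun_ge:
  assumes "0 \<le> r" "r \<le> mfun x y"
  shows "hdist x y \<le> (1 - r) / (1 + r)"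
proof -
  have "(1 - mfun x y) * (1 + r) \<le> (1 - r) * (1 + mfun x y)"
    using assms by (simp add: algebra_simps)
  with assms show ?thesis
    by (simp add: hdist_def divide_simps)
qed

lemma hdist_le_contr:
  assumes "\<forall>x\<in>posCone. x v* M \<in> posCone" "x \<in> posCone" "y \<in> posCone"
  shows "hdist (x v* M) (y v* M) \<le> contr M"
  unfolding contr_def
  by (rule cSup_upper) (use assms hdist_le_1 in \<open>blast, auto intro!: bdd_aboveI[where M = 1]\<close>)

lemma contr_le:
  assumes "\<And>x y. x \<in> posCone \<Longrightarrow> y \<in> posCone \<Longrightarrow> hdist (x v* M) (y v* M) \<le> c"
  shows "contr M \<le> c"
  unfolding contr_def
  by (rule cSup_least) (use assms axis_in_posCone in blast)+

lemma posCone_invariant_iff_rows_nonzero: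
  fixes M :: "real ^ 'n ^ 'n"
  assumes nonneg: "\<forall>i j. 0 \<le> M $ i $ j"
  shows "(\<forall>x\<in>posCone. x v* M \<in> posCone) \<longleftrightarrow> (\<forall>i. \<exists>j. M $ i $ j \<noteq> 0)"
proof
  assume "\<forall>x\<in>posCone. x v* M \<in> posCone"
  then have "M $ i \<in> posCone" for i
    using axis_in_posCone by (metis axis_vector_matrix_mult)
  then show "\<forall>i. \<exists>j. M $ i $ j \<noteq> 0"
    by (auto simp: posCone_def vec_eq_iff)
next
  assume rows: "\<forall>i. \<exists>j. M $ i $ j \<noteq> 0"
  show "\<forall>x\<in>posCone. x v* M \<in> posCone"
  proof
    fix x :: "real ^ 'n" assume x: "x \<in> posCone"
    obtain i where i: "0 < x $ i"
      using x by (rule posCone_obtain_pos)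
    obtain j where "M $ i $ j \<noteq> 0"
      using rows by blast
    with nonneg i have "0 < x $ i * M $ i $ j"
      by (simp add: order_less_le)
    also have "\<dots> \<le> (x v* M) $ j"
      unfolding vector_matrix_mult_nth
      by (rule member_le_sum) (auto simp: nonneg posCone_nonneg[OF x])
    finally show "x v* M \<in> posCone"
      unfolding posCone_iff_ex_pos vector_matrix_mult_nth
      by (auto intro!: sum_nonneg simp: nonneg posCone_nonneg[OF x])
  qed
qed

lemma one_le_contr_if_mixed_column:
  fixes M :: "real ^ 'n ^ 'n"
  assumes nonneg: "\<forall>i j. 0 \<le> M $ i $ j"
    and invariant: "\<forall>x\<in>posCone. x v* M \<in> posCone"
    and "M $ i $ j = 0" "M $ k $ j \<noteq> 0"
  shows "1 \<le> contr M"
proof -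
  have rows: "M $ i \<in> posCone" "M $ k \<in> posCone"
    using invariant axis_in_posCone by (metis axis_vector_matrix_mult)+
  have "aleph (M $ k) (M $ i) = 0"
    using assms by (intro aleph_eq_0 rows) (auto simp: less_eq_real_def)
  then have "hdist (M $ i) (M $ k) = 1"
    by (simp add: hdist_def mfun_def)
  then show ?thesis
    using hdist_le_contr[OF invariant axis_in_posCone axis_in_posCone, of i k]
    by (simp add: axis_vector_matrix_mult)
qed

lemma finite_pos_lower_bound:
  fixes P :: "real set"
  assumes "finite P"
  obtains a where "0 < a" "\<And>p. p \<in> P \<Longrightarrow> 0 < p \<Longrightarrow> a \<le> p"
proof
  show "0 < Min (insert 1 {p\<in>P. 0 < p})"
    using assms by simp
  show "Min (insert 1 {p\<in>P. 0 < p}) \<le> p" if "p \<in> P" "0 < p" for p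
    using assms that by (intro Min_le) auto
qed

lemma aleph_vector_matrix_mult_ge:
  fixes M :: "real ^ 'n ^ 'n"
  assumes columns: "\<And>j. (\<forall>k. M $ k $ j = 0) \<or> (\<forall>k. a \<le> M $ k $ j)"
    and upper: "\<And>i j. M $ i $ j \<le> A" and "0 < a" "0 < A"
    and x: "x \<in> posCone" and y: "y \<in> posCone" and xM: "x v* M \<in> posCone"
  shows "a * (\<Sum>i\<in>UNIV. y $ i) / (A * (\<Sum>i\<in>UNIV. x $ i)) \<le> aleph (x v* M) (y v* M)"
    (is "?b \<le> _")
proof (rule aleph_ge[OF xM])
  have "0 < (\<Sum>i\<in>UNIV. x $ i)" "0 < (\<Sum>i\<in>UNIV. y $ i)"
    using x y by (simp_all add: sum_pos_if_posCone)
  with \<open>0 < a\<close> \<open>0 < A\<close> have b_nonneg: "0 \<le> ?b"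
    and b_scale: "?b * (A * (\<Sum>i\<in>UNIV. x $ i)) = a * (\<Sum>i\<in>UNIV. y $ i)"
    by simp_all
  show "0 \<le> ?b" by (fact b_nonneg)
  show "?b * (x v* M) $ j \<le> (y v* M) $ j" for j
  proof (cases "\<forall>k. M $ k $ j = 0")
    case True
    then show ?thesis by (simp add: vector_matrix_mult_nth)
  next
    case False
    with columns have column_ge: "\<And>k. a \<le> M $ k $ j" by blast
    have "?b * (x v* M) $ j \<le> ?b * (A * (\<Sum>i\<in>UNIV. x $ i))"
      using b_nonneg x
      by (intro mult_left_mono vector_matrix_mult_nth_le upper) (auto simp: posCone_nonneg)
    also have "\<dots> \<le> (y v* M) $ j"
      unfolding b_scale using y column_ge
      by (intro vector_matrix_mult_nth_ge) (auto simp: posCone_nonneg)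
    finally show ?thesis .
  qed
qed

lemma contr_less_1_if_columns:
  fixes M :: "real ^ 'n ^ 'n"
  assumes nonneg: "\<forall>i j. 0 \<le> M $ i $ j"
    and invariant: "\<forall>x\<in>posCone. x v* M \<in> posCone"
    and columns: "\<forall>i j. M $ i $ j = 0 \<longrightarrow> (\<forall>k. M $ k $ j = 0)"
  shows "contr M < 1"
proof -
  obtain a where "0 < a" and a: "\<And>i j. 0 < M $ i $ j \<Longrightarrow> a \<le> M $ i $ j"
    by (rule finite_pos_lower_bound[of "range (\<lambda>(i, j). M $ i $ j)"]) auto
  define A where "A = Max (insert 1 (range (\<lambda>(i, j). M $ i $ j)))"
  have A: "M $ i $ j \<le> A" for i j
    unfolding A_def by (rule Max_ge) auto
  have "0 < A"
    unfolding A_def by (rule less_le_trans[OF zero_less_one Max_ge]) auto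
  have "(\<forall>k. M $ k $ j = 0) \<or> (\<forall>k. a \<le> M $ k $ j)" for j
    using nonneg columns a by (metis less_eq_real_def)
  note aleph_image_ge = aleph_vector_matrix_mult_ge[OF this A \<open>0 < a\<close> \<open>0 < A\<close>]
  define r where "r = (a / A)\<^sup>2"
  have "0 < r" using \<open>0 < a\<close> \<open>0 < A\<close> by (simp add: r_def)
  have "hdist (x v* M) (y v* M) \<le> (1 - r) / (1 + r)" if x: "x \<in> posCone" and y: "y \<in> posCone" for x y
  proof (rule hdist_le_if_mfun_ge)
    let ?sx = "\<Sum>i\<in>UNIV. x $ i" and ?sy = "\<Sum>i\<in>UNIV. y $ i"
    have "0 < ?sx" "0 < ?sy"
      using x y by (simp_all add: sum_pos_if_posCone)
    then have "r = (a * ?sy / (A * ?sx)) * (a * ?sx / (A * ?sy))"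
      using \<open>0 < A\<close> by (simp add: r_def power2_eq_square field_simps)
    also have "\<dots> \<le> mfun (x v* M) (y v* M)"
      unfolding mfun_def using x y invariant \<open>0 < a\<close> \<open>0 < A\<close> \<open>0 < ?sx\<close> \<open>0 < ?sy\<close>
      by (intro mult_mono aleph_image_ge aleph_nonneg) auto
    finally show "r \<le> mfun (x v* M) (y v* M)" .
  qed (use \<open>0 < r\<close> in simp)
  then have "contr M \<le> (1 - r) / (1 + r)"
    by (rule contr_le)
  also have "\<dots> < 1"
    using \<open>0 < r\<close> by simp
  finally show ?thesis .
qed

theorem mainTheorem8:
  fixes M :: "real ^ 'n ^ 'n"
  assumes nonneg: "\<forall>i j. 0 \<le> M $ i $ j"
  shows "((\<forall>x\<in>posCone. x v* M \<in> posCone) \<longleftrightarrow> (\<forall>i. \<exists>j. M $ i $ j \<noteq> 0))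
    \<and> ((\<forall>x\<in>posCone. x v* M \<in> posCone) \<longrightarrow>
         (contr M < 1 \<longleftrightarrow> (\<forall>i j. M $ i $ j = 0 \<longrightarrow> (\<forall>k. M $ k $ j = 0))))"
proof (intro conjI impI)
  show "(\<forall>x\<in>posCone. x v* M \<in> posCone) \<longleftrightarrow> (\<forall>i. \<exists>j. M $ i $ j \<noteq> 0)"
    using nonneg by (rule posCone_invariant_iff_rows_nonzero)
next
  assume invariant: "\<forall>x\<in>posCone. x v* M \<in> posCone"
  show "contr M < 1 \<longleftrightarrow> (\<forall>i j. M $ i $ j = 0 \<longrightarrow> (\<forall>k. M $ k $ j = 0))"
    using one_le_contr_if_mixed_column[OF nonneg invariant]
      contr_less_1_if_columns[OF nonneg invariant]
    by fastforce
qed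

end
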